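(* Let $H$ be a real Hilbert space, let $D\subseteq H$ be a nonempty closed convex set, and let $T_1,\dots,T_m:D\to D$ be firmly nonexpansive operators with $F:=\bigcap_{i=1}^m\mathrm{Fix}(T_i)\neq\emptyset$. Fix $(\Omega,w)\in\mathcal{M}$, let $(\lambda_k)_{k\in\mathbb{N}}$ be a steering sequence, and let $u,x^0\in D$. Then the sequence defined by $$x^{k+1}=\lambda_k u+(1-\lambda_k)\sum_{t\in\Omega}w(t)T[t](x^k),\quad k\ge 0,$$ converges strongly to $P_F(u)$.
   Context: An operator $T:D\to H$ is firmly nonexpansive if $\|T(x)-T(y)\|^2\le\langle x-y,T(x)-T(y)\rangle$ for all $x,y\in D$. $\mathrm{Fix}(T)=\{x\in D: T(x)=x\}$; $P_F$ is the metric (nearest point) projection onto the closed convex set $F$. An index vector is a finite tuple $t=(t_1,\dots,t_q)$ with each $t_\ell\in\{1,\dots,m\}$; the string operator is $T[t]:=T_{t_q}T_{t_{q-1}}\cdots T_{t_1}$. A finite set $\Omega$ of index vectors is fit if every $i\in\{1,\dots,m\}$ appears as a component of some $t\in\Omega$. $\mathcal{M}$ denotes the collection of all pairs $(\Omega,w)$ where $\Omega$ is a fit finite set of index vectors and $w:\Omega\to(0,1]$ satisfies $\sum_{t\in\Omega}w(t)=1$. A steering sequence is a real sequence $(\lambda_k)_{k\in\mathbb{N}}$ with $\lambda_k\in[0,1]$ for all $k$, $\lim_{k\to\infty}\lambda_k=0$, $\sum_{k=0}^\infty\lambda_k=+\infty$, and $\sum_{k=0}^\infty|\lambda_{k+1}-\lambda_k|<\infty$.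 $\mathbb{N}$ includes $0$. *)

theory Defs
  imports "HOL-Analysis.Analysis"
begin

definition firmly_nonexpansive_on :: "'a::real_inner set \<Rightarrow> ('a \<Rightarrow> 'a) \<Rightarrow> bool" where
  "firmly_nonexpansive_on D T \<longleftrightarrow>
     (\<forall>x\<in>D. \<forall>y\<in>D. (norm (T x - T y))\<^sup>2 \<le> inner (x - y) (T x - T y))"

definition Fix_on :: "'a set \<Rightarrow> ('a \<Rightarrow> 'a) \<Rightarrow> 'a set" where
  "Fix_on D T = {x \<in> D. T x = x}"

text \<open>Metric (nearest point) projection onto a set F (well defined and unique for
  nonempty closed convex F in a Hilbert space).\<close>
definition metric_proj :: "'a::real_inner set \<Rightarrow> 'a \<Rightarrow> 'a" where
  "metric_proj F u = (SOME p. p \<in> F \<and> (\<forall>y\<in>F. dist u p \<le> dist u y))"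

text \<open>String operator T[t] = T_{t_q} o ... o T_{t_1} for t = [t_1,...,t_q].\<close>
definition string_op :: "(nat \<Rightarrow> 'a \<Rightarrow> 'a) \<Rightarrow> nat list \<Rightarrow> 'a \<Rightarrow> 'a" where
  "string_op T t x = fold (\<lambda>i y. T i y) t x"

definition index_vector :: "nat \<Rightarrow> nat list \<Rightarrow> bool" where
  "index_vector m t \<longleftrightarrow> t \<noteq> [] \<and> set t \<subseteq> {1..m}"

definition fit :: "nat \<Rightarrow> nat list set \<Rightarrow> bool" where
  "fit m \<Omega> \<longleftrightarrow> finite \<Omega> \<and> (\<forall>t\<in>\<Omega>. index_vector m t) \<and>
     (\<forall>i\<in>{1..m}. \<exists>t\<in>\<Omega>. i \<in> set t)"

definition in_M :: "nat \<Rightarrow> nat list set \<Rightarrow> (nat list \<Rightarrow> real) \<Rightarrow> bool" where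
  "in_M m \<Omega> w \<longleftrightarrow> fit m \<Omega> \<and> (\<forall>t\<in>\<Omega>. 0 < w t \<and> w t \<le> 1) \<and> (\<Sum>t\<in>\<Omega>. w t) = 1"

definition steering_sequence :: "(nat \<Rightarrow> real) \<Rightarrow> bool" where
  "steering_sequence lam \<longleftrightarrow> (\<forall>k. 0 \<le> lam k \<and> lam k \<le> 1) \<and> lam \<longlonglongrightarrow> 0 \<and>
     \<not> summable lam \<and> summable (\<lambda>k. \<bar>lam (Suc k) - lam k\<bar>)"

end

(*
  The averaged string operator S x = (SUM t:Omega. w t *R T[t] x) is nonexpansive on D, and since
  firmly nonexpansive maps are strictly quasi-nonexpansive and Omega is fit, its fixed points are
  exactly the common fixed points F of the T i. The iteration is therefore Halpern's iteration for S.
  Asymptotic regularity (x (k+1) - x k -> 0, hence S (x k) - x k -> 0) and Xu's lemma applied to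
  |x k - P_F u|^2 reduce convergence to  limsup <u - P_F u, x k - P_F u> <= 0.  Instead of weak
  cluster points, this limsup comes from Browder's approximating curve z_e, defined by
  z_e - S z_e = e (u - z_e): it converges strongly to P_F u as e -> 0, and monotonicity of I - S gives
  e <u - z_e, x k - z_e> <= |S (x k) - x k| |x k - z_e|.
*)
theory Submission
  imports Defs
begin

section \<open>Xu's lemma on recursive inequalities\<close>

lemma not_summable_nonneg_tail_unbounded:
  fixes g :: "nat \<Rightarrow> real"
  assumes "\<And>n. 0 \<le> g n" and "\<not> summable g"
  obtains J where "B \<le> sum g {N..<N + J}"
proof -
  have "\<not> summable (\<lambda>k. g (k + N))"
    using assms(2) by (simp add: summable_iff_shift)
  then obtain J where "B < (\<Sum>k<J. g (k + N))"
    using summableI_nonneg_bounded[of "\<lambda>k. g (k + N)" B] assms(1) by (meson not_le)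
  also have "(\<Sum>k<J. g (k + N)) = sum g {N..<N + J}"
    by (metis add.commute add_0 atLeast0LessThan sum.shift_bounds_nat_ivl)
  finally show ?thesis
    using that by (meson less_imp_le)
qed

lemma prod_one_minus_le_exp_neg_sum:
  fixes \<gamma> :: "'i \<Rightarrow> real"
  assumes "finite A" and "\<And>k. k \<in> A \<Longrightarrow> 0 \<le> \<gamma> k \<and> \<gamma> k \<le> 1"
  shows "(\<Prod>k\<in>A. 1 - \<gamma> k) \<le> exp (- sum \<gamma> A)"
proof -
  have "0 \<le> 1 - \<gamma> k \<and> 1 - \<gamma> k \<le> exp (- \<gamma> k)" if "k \<in> A" for k
    using assms(2)[OF that] exp_ge_add_one_self[of "- \<gamma> k"] by simp
  then have "(\<Prod>k\<in>A. 1 - \<gamma> k) \<le> (\<Prod>k\<in>A. exp (- \<gamma> k))"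
    by (rule prod_mono)
  then show ?thesis
    using \<open>finite A\<close> by (simp add: exp_sum sum_negf[symmetric])
qed

lemma prod_one_minus_tendsto_zero:
  fixes \<gamma> :: "nat \<Rightarrow> real"
  assumes \<gamma>: "\<And>n. 0 \<le> \<gamma> n \<and> \<gamma> n \<le> 1" and "\<not> summable \<gamma>"
  shows "(\<lambda>j. \<Prod>k\<in>{N..<N + j}. 1 - \<gamma> k) \<longlonglongrightarrow> 0"
proof (rule LIMSEQ_I)
  fix e :: real assume "0 < e"
  obtain J where J: "1 - ln e \<le> sum \<gamma> {N..<N + J}"
    using not_summable_nonneg_tail_unbounded \<gamma> assms(2) by blast
  have "\<bar>\<Prod>k\<in>{N..<N + j}. 1 - \<gamma> k\<bar> < e" if "J \<le> j" for j
  proof -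
    have "sum \<gamma> {N..<N + J} \<le> sum \<gamma> {N..<N + j}"
      using that \<gamma> by (intro sum_mono2) auto
    then have "exp (- sum \<gamma> {N..<N + j}) < e"
      using J \<open>0 < e\<close> by (smt (verit) exp_less_cancel_iff exp_ln)
    moreover have "0 \<le> (\<Prod>k\<in>{N..<N + j}. 1 - \<gamma> k)"
      using \<gamma> by (intro prod_nonneg) auto
    ultimately show ?thesis
      using prod_one_minus_le_exp_neg_sum[of "{N..<N + j}" \<gamma>] \<gamma> by simp
  qed
  then show "\<exists>J. \<forall>j\<ge>J. norm ((\<Prod>k\<in>{N..<N + j}. 1 - \<gamma> k) - 0) < e"
    by auto
qed

lemma recursive_inequality_unfold:
  fixes d \<gamma> c :: "nat \<Rightarrow> real"
  assumes "\<And>n. 0 \<le> \<gamma> n \<and> \<gamma> n \<le> 1" and "\<And>n. 0 \<le> c n"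
    and "\<And>n. N \<le> n \<Longrightarrow> d (Suc n) \<le> (1 - \<gamma> n) * d n + c n"
  shows "d (N + j) \<le> (\<Prod>k\<in>{N..<N + j}. 1 - \<gamma> k) * d N + sum c {N..<N + j}"
proof (induction j)
  case 0
  then show ?case by simp
next
  case (Suc j)
  let ?P = "\<Prod>k\<in>{N..<N + j}. 1 - \<gamma> k" and ?C = "sum c {N..<N + j}" and ?n = "N + j"
  have "d (N + Suc j) \<le> (1 - \<gamma> ?n) * d ?n + c ?n"
    using assms(3)[of ?n] by simp
  also have "\<dots> \<le> (1 - \<gamma> ?n) * (?P * d N + ?C) + c ?n"
    using Suc assms(1)[of ?n] by (intro add_right_mono mult_left_mono) auto
  also have "\<dots> \<le> (1 - \<gamma> ?n) * ?P * d N + ?C + c ?n"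
    using assms(1)[of ?n] sum_nonneg[of "{N..<N + j}" c] assms(2)
    by (simp add: algebra_simps mult_left_le_one_le)
  also have "\<dots> = (\<Prod>k\<in>{N..<N + Suc j}. 1 - \<gamma> k) * d N + sum c {N..<N + Suc j}"
    by (simp add: algebra_simps)
  finally show ?case .
qed

lemma recursive_inequality_eventually_lt:
  fixes d \<gamma> c :: "nat \<Rightarrow> real"
  assumes \<gamma>: "\<And>n. 0 \<le> \<gamma> n \<and> \<gamma> n \<le> 1" and "\<not> summable \<gamma>" and c: "\<And>n. 0 \<le> c n"
    and rec: "\<And>n. N \<le> n \<Longrightarrow> d (Suc n) \<le> (1 - \<gamma> n) * d n + c n" and "0 < e"
  shows "\<forall>\<^sub>F j in sequentially. d (N + j) < e + sum c {N..<N + j}"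
proof -
  have "(\<lambda>j. (\<Prod>k\<in>{N..<N + j}. 1 - \<gamma> k) * d N) \<longlonglongrightarrow> 0"
    using tendsto_mult_right[OF prod_one_minus_tendsto_zero[OF \<gamma> \<open>\<not> summable \<gamma>\<close>]] by simp
  then have "\<forall>\<^sub>F j in sequentially. (\<Prod>k\<in>{N..<N + j}. 1 - \<gamma> k) * d N < e"
    using \<open>0 < e\<close> by (simp add: order_tendstoD(2))
  then show ?thesis
  proof (rule eventually_mono)
    fix j assume "(\<Prod>k\<in>{N..<N + j}. 1 - \<gamma> k) * d N < e"
    moreover have "d (N + j) \<le> (\<Prod>k\<in>{N..<N + j}. 1 - \<gamma> k) * d N + sum c {N..<N + j}"
      using \<gamma> c rec by (rule recursive_inequality_unfold)
    ultimately show "d (N + j) < e + sum c {N..<N + j}"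
      by linarith
  qed
qed

lemma recursive_inequality_tendsto_zero:
  fixes a \<gamma> b c :: "nat \<Rightarrow> real"
  assumes a: "\<And>n. 0 \<le> a n" and \<gamma>: "\<And>n. 0 \<le> \<gamma> n \<and> \<gamma> n \<le> 1" and "\<not> summable \<gamma>"
    and c: "\<And>n. 0 \<le> c n" and "summable c"
    and b: "\<And>e. 0 < e \<Longrightarrow> eventually (\<lambda>n. b n \<le> e) sequentially"
    and rec: "\<And>n. a (Suc n) \<le> (1 - \<gamma> n) * a n + \<gamma> n * b n + c n"
  shows "a \<longlonglongrightarrow> 0"
proof (rule LIMSEQ_I)
  fix r :: real assume "0 < r"
  define e where "e = r / 3"
  have "0 < e" using \<open>0 < r\<close> by (simp add: e_def)
  obtain N1 where N1: "\<And>n. N1 \<le> n \<Longrightarrow> b n \<le> e"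
    using b[OF \<open>0 < e\<close>] by (auto simp: eventually_sequentially)
  obtain N2 where N2: "\<And>m n. N2 \<le> m \<Longrightarrow> norm (sum c {m..<n}) < e"
    using \<open>summable c\<close> \<open>0 < e\<close> unfolding summable_Cauchy by blast
  define N where "N = max N1 N2"
  \<comment> \<open>Shifting by \<open>e\<close> absorbs the term \<open>\<gamma> n * b n\<close> once \<open>b n \<le> e\<close>.\<close>
  define d where "d n = max (a n - e) 0" for n
  have d_rec: "d (Suc n) \<le> (1 - \<gamma> n) * d n + c n" if "N \<le> n" for n
  proof -
    have "\<gamma> n * b n \<le> \<gamma> n * e"
      using N1[of n] that \<gamma>[of n] by (simp add: N_def mult_left_mono)
    then have "a (Suc n) - e \<le> (1 - \<gamma> n) * (a n - e) + c n"
      using rec[of n] by (simp add: algebra_simps)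
    also have "\<dots> \<le> (1 - \<gamma> n) * d n + c n"
      using \<gamma>[of n] by (intro add_right_mono mult_left_mono) (auto simp: d_def)
    finally show ?thesis
      using \<gamma>[of n] c[of n] by (simp add: d_def)
  qed
  then have "\<forall>\<^sub>F j in sequentially. d (N + j) < e + sum c {N..<N + j}"
    using recursive_inequality_eventually_lt[where d = d and \<gamma> = \<gamma> and c = c and N = N]
      \<gamma> c \<open>\<not> summable \<gamma>\<close> \<open>0 < e\<close> by blast
  then obtain J where J: "\<And>j. J \<le> j \<Longrightarrow> d (N + j) < e + sum c {N..<N + j}"
    unfolding eventually_sequentially by blast
  have "norm (a n - 0) < r" if "N + J \<le> n" for n
  proof -
    obtain j where j: "n = N + j" "J \<le> j"
      using \<open>N + J \<le> n\<close> le_Suc_ex by force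
    have "sum c {N..<N + j} < e"
      using N2[of N "N + j"] sum_nonneg[of "{N..<N + j}" c] c by (simp add: N_def)
    then have "d n < e + e"
      using J[OF j(2)] j(1) by simp
    then have "a n < 3 * e"
      by (simp add: d_def)
    then show ?thesis
      using a[of n] by (simp add: e_def)
  qed
  then show "\<exists>n0. \<forall>n\<ge>n0. norm (a n - 0) < r" by blast
qed

section \<open>Nonexpansive maps in Hilbert space\<close>

definition nonexpansive_on :: "'a::real_normed_vector set \<Rightarrow> ('a \<Rightarrow> 'a) \<Rightarrow> bool" where
  "nonexpansive_on D S \<longleftrightarrow> (\<forall>x\<in>D. \<forall>y\<in>D. norm (S x - S y) \<le> norm (x - y))"

lemma nonexpansive_onD:
  "nonexpansive_on D S \<Longrightarrow> x \<in> D \<Longrightarrow> y \<in> D \<Longrightarrow> norm (S x - S y) \<le> norm (x - y)"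
  unfolding nonexpansive_on_def by blast

lemma firmly_nonexpansive_imp_nonexpansive:
  assumes "firmly_nonexpansive_on D T"
  shows "nonexpansive_on D T"
  unfolding nonexpansive_on_def
proof (intro ballI)
  fix x y assume "x \<in> D" "y \<in> D"
  then have "norm (T x - T y) * norm (T x - T y) \<le> inner (x - y) (T x - T y)"
    using assms unfolding firmly_nonexpansive_on_def by (simp add: power2_eq_square)
  also have "\<dots> \<le> norm (x - y) * norm (T x - T y)"
    by (rule norm_cauchy_schwarz)
  finally show "norm (T x - T y) \<le> norm (x - y)"
    by (cases "T x = T y") auto
qed

lemma firmly_nonexpansive_fixed_point_ineq:
  assumes "firmly_nonexpansive_on D T" and "x \<in> D" "q \<in> D" "T q = q"
  shows "(norm (x - T x))\<^sup>2 + (norm (T x - q))\<^sup>2 \<le> (norm (x - q))\<^sup>2"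
proof -
  have "(norm (T x - q))\<^sup>2 \<le> inner (x - q) (T x - q)"
    using assms unfolding firmly_nonexpansive_on_def by force
  moreover have "(norm (x - q))\<^sup>2 =
      (norm (x - T x))\<^sup>2 + (norm (T x - q))\<^sup>2 + 2 * (inner (x - q) (T x - q) - (norm (T x - q))\<^sup>2)"
    by (simp add: power2_norm_eq_inner inner_diff_left inner_diff_right inner_commute algebra_simps)
  ultimately show ?thesis
    by (smt (verit))
qed

lemma nonexpansive_on_monotone_complement:
  assumes "nonexpansive_on D S" and "x \<in> D" "y \<in> D"
  shows "0 \<le> inner ((x - S x) - (y - S y)) (x - y)"
proof -
  have "inner (S x - S y) (x - y) \<le> norm (S x - S y) * norm (x - y)"
    by (rule norm_cauchy_schwarz)
  also have "\<dots> \<le> norm (x - y) * norm (x - y)"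
    using nonexpansive_onD[OF assms] by (simp add: mult_right_mono)
  also have "\<dots> = inner (x - y) (x - y)"
    by (simp add: power2_eq_square[symmetric] power2_norm_eq_inner)
  finally show ?thesis
    by (simp add: inner_diff_left inner_diff_right algebra_simps)
qed

lemma metric_proj_eqI:
  fixes F :: "'a::real_inner set"
  assumes "p \<in> F" and variational: "\<And>q. q \<in> F \<Longrightarrow> inner (u - p) (q - p) \<le> 0"
  shows "metric_proj F u = p"
proof -
  have pythagoras: "(norm (q - p))\<^sup>2 + (norm (u - p))\<^sup>2 \<le> (norm (u - q))\<^sup>2" if "q \<in> F" for q
  proof -
    have "u - q = (u - p) - (q - p)" by simp
    then show ?thesis
      using variational[OF that] by (simp add: dot_norm_neg)
  qed
  have "dist u p \<le> dist u q" if "q \<in> F" for q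
  proof -
    have "(norm (u - p))\<^sup>2 \<le> (norm (u - q))\<^sup>2"
      using pythagoras[OF that] zero_le_power2[of "norm (q - p)"] by linarith
    then have "norm (u - p) \<le> norm (u - q)"
      using power2_le_imp_le norm_ge_zero by blast
    then show ?thesis
      by (simp add: dist_norm)
  qed
  moreover have "p' = p" if "p' \<in> F" "\<forall>q\<in>F. dist u p' \<le> dist u q" for p'
  proof -
    have "norm (u - p') \<le> norm (u - p)"
      using that(2) \<open>p \<in> F\<close> by (simp add: dist_norm)
    then have "(norm (u - p'))\<^sup>2 \<le> (norm (u - p))\<^sup>2"
      using norm_ge_zero power_mono by blast
    then have "(norm (p' - p))\<^sup>2 \<le> 0"
      using pythagoras[OF that(1)] by linarith
    then show ?thesis
      by simp
  qed
  ultimately show ?thesis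
    unfolding metric_proj_def using \<open>p \<in> F\<close> by (intro some_equality) blast+
qed

lemma inner_base_point_change_le:
  fixes u p y z :: "'a::real_inner"
  shows "inner (u - p) (y - p) \<le> inner (u - z) (y - z) + norm (z - p) * (norm (u - p) + norm (y - z))"
proof -
  have "inner (u - p) (y - p) = inner (u - z) (y - z) + inner (u - p) (z - p) + inner (z - p) (y - z)"
    by (simp add: inner_diff_left inner_diff_right inner_commute)
  moreover have "inner (u - p) (z - p) \<le> norm (u - p) * norm (z - p)"
    and "inner (z - p) (y - z) \<le> norm (z - p) * norm (y - z)"
    by (rule norm_cauchy_schwarz)+
  ultimately show ?thesis
    by (simp add: algebra_simps)
qed

lemma sq_dist_le_increments_imp_Cauchy:
  fixes z :: "nat \<Rightarrow> 'a::real_normed_vector" and r :: "nat \<Rightarrow> real"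
  assumes bounded: "\<And>n. r n \<le> B" and dist: "\<And>m n. m \<le> n \<Longrightarrow> (norm (z n - z m))\<^sup>2 \<le> r n - r m"
  shows "Cauchy z"
proof (rule CauchyI)
  fix e :: real assume "0 < e"
  have "incseq r"
  proof (rule incseq_SucI)
    fix n show "r n \<le> r (Suc n)"
      using dist[of n "Suc n"] zero_le_power2[of "norm (z (Suc n) - z n)"] by linarith
  qed
  then have "Cauchy r"
    using bounded by (blast intro: LIMSEQ_imp_Cauchy incseq_convergent)
  then obtain M where M: "\<And>m n. M \<le> m \<Longrightarrow> M \<le> n \<Longrightarrow> \<bar>r m - r n\<bar> < e\<^sup>2"
    using \<open>0 < e\<close> by (metis CauchyD real_norm_def zero_less_power)
  have "norm (z m - z n) < e" if "M \<le> m" "M \<le> n" for m n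
  proof -
    have "(norm (z m - z n))\<^sup>2 \<le> \<bar>r m - r n\<bar>"
    proof (cases "m \<le> n")
      case True
      then show ?thesis using dist[of m n] by (simp add: norm_minus_commute)
    next
      case False
      then show ?thesis using dist[of n m] by simp
    qed
    then have "(norm (z m - z n))\<^sup>2 < e\<^sup>2"
      using M[OF that] by linarith
    then show ?thesis
      using \<open>0 < e\<close> by (simp add: power_less_imp_less_base)
  qed
  then show "\<exists>M. \<forall>m\<ge>M. \<forall>n\<ge>M. norm (z m - z n) < e" by blast
qed

section \<open>Browder's approximating curve\<close>

locale nonexpansive_self_map =
  fixes D :: "'a::{real_inner,complete_space} set" and S :: "'a \<Rightarrow> 'a"
  assumes closed_D: "closed D" and convex_D: "convex D"
    and S_maps_D: "S ` D \<subseteq> D" and nonexpansive_S: "nonexpansive_on D S"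
begin

abbreviation fixed_points :: "'a set" where
  "fixed_points \<equiv> {y \<in> D. S y = y}"

text \<open>\<open>z\<close> is the fixed point of the contraction \<open>y \<mapsto> (S y + e u) / (1 + e)\<close>; as \<open>e \<rightarrow> 0\<close>
  these points trace Browder's approximating curve.\<close>
definition approx_point :: "'a \<Rightarrow> real \<Rightarrow> 'a \<Rightarrow> bool" where
  "approx_point u e z \<longleftrightarrow> z \<in> D \<and> z - S z = e *\<^sub>R (u - z)"

lemma approx_point_exists:
  assumes "u \<in> D" and "0 < e"
  obtains z where "approx_point u e z"
proof -
  define f where "f y = (1 / (1 + e)) *\<^sub>R S y + (e / (1 + e)) *\<^sub>R u" for y
  have "f y \<in> D" if "y \<in> D" for y
    unfolding f_def using S_maps_D that \<open>u \<in> D\<close> \<open>0 < e\<close>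
    by (intro convexD[OF convex_D]) (auto simp: add_divide_distrib[symmetric])
  moreover have "dist (f y) (f y') \<le> (1 / (1 + e)) * dist y y'" if "y \<in> D" "y' \<in> D" for y y'
  proof -
    have "f y - f y' = (1 / (1 + e)) *\<^sub>R (S y - S y')"
      by (simp add: f_def algebra_simps)
    then show ?thesis
      using nonexpansive_onD[OF nonexpansive_S that] \<open>0 < e\<close>
      by (simp add: dist_norm divide_right_mono)
  qed
  ultimately obtain z where "z \<in> D" "f z = z"
    using Banach_fix[of D "1 / (1 + e)" f] closed_D \<open>u \<in> D\<close> \<open>0 < e\<close>
    by (auto simp: complete_eq_closed)
  moreover have "(1 + e) *\<^sub>R f z = S z + e *\<^sub>R u"
    using \<open>0 < e\<close> by (simp add: f_def scaleR_add_right)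
  ultimately have "z - S z = e *\<^sub>R (u - z)"
    by (simp add: algebra_simps)
  with \<open>z \<in> D\<close> show thesis
    using that unfolding approx_point_def by blast
qed

lemma approx_point_inner_le:
  assumes "approx_point u e z" and "y \<in> D"
  shows "e * inner (u - z) (y - z) \<le> norm (S y - y) * norm (y - z)"
proof -
  have "0 \<le> inner ((z - S z) - (y - S y)) (z - y)"
    using assms nonexpansive_on_monotone_complement[OF nonexpansive_S]
    unfolding approx_point_def by blast
  also have "\<dots> = inner (e *\<^sub>R (u - z) - (y - S y)) (z - y)"
    using assms(1) unfolding approx_point_def by simp
  also have "\<dots> = inner (S y - y) (z - y) - e * inner (u - z) (y - z)"
    by (simp add: inner_diff_left inner_diff_right algebra_simps)
  finally have "e * inner (u - z) (y - z) \<le> inner (S y - y) (z - y)"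
    by simp
  also have "\<dots> \<le> norm (S y - y) * norm (y - z)"
    using norm_cauchy_schwarz[of "S y - y" "z - y"] by (simp add: norm_minus_commute)
  finally show ?thesis .
qed

lemma approx_point_inner_fixed_point_le:
  assumes "approx_point u e z" and "0 < e" and "q \<in> fixed_points"
  shows "inner (u - z) (q - z) \<le> 0"
  using approx_point_inner_le[OF assms(1), of q] assms(2,3) by (simp add: mult_le_0_iff)

lemma approx_point_dist_le:
  assumes "approx_point u e z" and "0 < e" and "q \<in> fixed_points"
  shows "norm (z - u) \<le> norm (q - u)"
proof -
  have "norm (z - u) * norm (z - u) = inner (z - u) (q - u) + inner (u - z) (q - z)"
    by (simp add: power2_eq_square[symmetric] power2_norm_eq_inner inner_diff_left
        inner_diff_right inner_commute)
  also have "\<dots> \<le> norm (z - u) * norm (q - u)"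
    using approx_point_inner_fixed_point_le[OF assms] norm_cauchy_schwarz[of "z - u" "q - u"]
    by linarith
  finally show ?thesis
    by (cases "z = u") auto
qed

lemma approx_points_sq_dist_le:
  assumes "approx_point u e z" "approx_point u e' z'" and "0 < e'" "e' < e"
  shows "(norm (z' - z))\<^sup>2 \<le> (norm (z' - u))\<^sup>2 - (norm (z - u))\<^sup>2"
proof -
  define A B I where "A = (norm (z - u))\<^sup>2" "B = (norm (z' - u))\<^sup>2" "I = inner (z - u) (z' - u)"
  have "0 \<le> inner ((z - S z) - (z' - S z')) (z - z')"
    using assms(1,2) nonexpansive_on_monotone_complement[OF nonexpansive_S]
    unfolding approx_point_def by blast
  also have "\<dots> = inner (e *\<^sub>R (u - z) - e' *\<^sub>R (u - z')) (z - z')"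
    using assms(1,2) unfolding approx_point_def by simp
  also have "\<dots> = (e + e') * I - e * A - e' * B"
    unfolding A_B_I_def
    by (simp add: power2_norm_eq_inner inner_diff_left inner_diff_right inner_commute algebra_simps)
  finally have weighted: "e * A + e' * B \<le> (e + e') * I"
    by simp
  have "2 * I \<le> A + B"
    using zero_le_power2[of "norm ((z - u) - (z' - u))"]
    unfolding A_B_I_def by (simp add: dot_norm_neg)
  then have "(e + e') * (2 * I) \<le> (e + e') * (A + B)"
    using assms(3,4) by (intro mult_left_mono) auto
  then have "(e - e') * A \<le> (e - e') * B"
    using weighted by (simp add: algebra_simps)
  then have "e' * A \<le> e' * B"
    using assms(3,4) by (simp add: mult_left_mono)
  then have "(e + e') * A \<le> (e + e') * I"
    using weighted by (simp add: algebra_simps)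
  then have "A \<le> I"
    using assms(3,4) by simp
  moreover have "(norm (z' - z))\<^sup>2 = B - 2 * I + A"
    unfolding A_B_I_def
    by (simp add: power2_norm_eq_inner inner_diff_left inner_diff_right inner_commute)
  ultimately show ?thesis
    unfolding A_B_I_def by linarith
qed

lemma fixed_point_of_asymptotic_sequence:
  assumes "\<And>n. z n \<in> D" and "z \<longlonglongrightarrow> p" and "(\<lambda>n. norm (S (z n) - z n)) \<longlonglongrightarrow> 0"
  shows "p \<in> fixed_points"
proof -
  have "p \<in> D"
    using closed_sequentially[OF closed_D] assms(1,2) by blast
  have "(\<lambda>n. S (z n) - S p) \<longlonglongrightarrow> 0"
  proof (rule Lim_null_comparison)
    show "\<forall>\<^sub>F n in sequentially. norm (S (z n) - S p) \<le> norm (z n - p)"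
      using nonexpansive_onD[OF nonexpansive_S assms(1) \<open>p \<in> D\<close>] by simp
    show "(\<lambda>n. norm (z n - p)) \<longlonglongrightarrow> 0"
      using assms(2) by (simp add: LIM_zero tendsto_norm_zero)
  qed
  then have "(\<lambda>n. S (z n)) \<longlonglongrightarrow> S p"
    by (rule LIM_zero_cancel)
  moreover have "(\<lambda>n. z n + (S (z n) - z n)) \<longlonglongrightarrow> p + 0"
    using assms(2,3) by (intro tendsto_add) (auto simp: tendsto_norm_zero_iff)
  ultimately have "S p = p"
    using LIMSEQ_unique by auto
  with \<open>p \<in> D\<close> show ?thesis by simp
qed

lemma approx_sequence_Cauchy:
  assumes z: "\<And>n. approx_point u (e n) (z n)" and e_pos: "\<And>n. 0 < e n"
    and e_decreasing: "\<And>m n. m < n \<Longrightarrow> e n < e m" and q: "q \<in> fixed_points"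
  shows "Cauchy z"
proof (rule sq_dist_le_increments_imp_Cauchy)
  show "(norm (z n - u))\<^sup>2 \<le> (norm (q - u))\<^sup>2" for n
    using approx_point_dist_le[OF z e_pos q] by (simp add: power_mono)
  show "(norm (z n - z m))\<^sup>2 \<le> (norm (z n - u))\<^sup>2 - (norm (z m - u))\<^sup>2" if "m \<le> n" for m n
  proof (cases "m = n")
    case False
    then have "e n < e m"
      using that e_decreasing by simp
    then show ?thesis
      using approx_points_sq_dist_le[OF z[of m] z[of n] e_pos[of n]] by simp
  qed simp
qed

lemma approx_sequence_residual_tendsto_zero:
  assumes z: "\<And>n. approx_point u (e n) (z n)" and e_pos: "\<And>n. 0 < e n"
    and "e \<longlonglongrightarrow> 0" and q: "q \<in> fixed_points"
  shows "(\<lambda>n. norm (S (z n) - z n)) \<longlonglongrightarrow> 0"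
proof (rule Lim_null_comparison)
  have "norm (S (z n) - z n) = e n * norm (z n - u)" for n
    using z[of n] e_pos[of n] unfolding approx_point_def
    by (metis abs_of_pos minus_diff_eq norm_minus_cancel norm_scaleR)
  then show "\<forall>\<^sub>F n in sequentially. norm (norm (S (z n) - z n)) \<le> e n * norm (q - u)"
    using approx_point_dist_le[OF z e_pos q] e_pos by (simp add: mult_left_mono less_imp_le)
  show "(\<lambda>n. e n * norm (q - u)) \<longlonglongrightarrow> 0"
    using tendsto_mult_right[OF \<open>e \<longlonglongrightarrow> 0\<close>] by simp
qed

lemma approx_sequence_limit_eq_metric_proj:
  assumes z: "\<And>n. approx_point u (e n) (z n)" and e_pos: "\<And>n. 0 < e n"
    and "z \<longlonglongrightarrow> p" and "p \<in> fixed_points"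
  shows "metric_proj fixed_points u = p"
proof (rule metric_proj_eqI[OF \<open>p \<in> fixed_points\<close>])
  fix q assume "q \<in> fixed_points"
  show "inner (u - p) (q - p) \<le> 0"
  proof (rule LIMSEQ_le_const2)
    show "(\<lambda>n. inner (u - z n) (q - z n)) \<longlonglongrightarrow> inner (u - p) (q - p)"
      using \<open>z \<longlonglongrightarrow> p\<close> by (intro tendsto_intros)
    show "\<exists>N. \<forall>n\<ge>N. inner (u - z n) (q - z n) \<le> 0"
      using approx_point_inner_fixed_point_le[OF z e_pos \<open>q \<in> fixed_points\<close>] by blast
  qed
qed

lemma approx_curve_tendsto_metric_proj:
  assumes "u \<in> D" and "fixed_points \<noteq> {}"
  obtains e z where "\<And>n. 0 < e n" "\<And>n. approx_point u (e n) (z n)"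
    and "z \<longlonglongrightarrow> metric_proj fixed_points u" and "metric_proj fixed_points u \<in> fixed_points"
proof -
  obtain q where q: "q \<in> fixed_points"
    using assms(2) by blast
  define e where "e n = inverse (real (Suc n))" for n
  have e_pos: "0 < e n" for n
    by (simp add: e_def)
  have "\<forall>n. \<exists>z. approx_point u (e n) z"
    using approx_point_exists[OF \<open>u \<in> D\<close> e_pos] by metis
  then obtain z where z: "\<And>n. approx_point u (e n) (z n)"
    by metis
  have "Cauchy z"
    by (rule approx_sequence_Cauchy[OF z e_pos _ q]) (simp add: e_def)
  then obtain p where "z \<longlonglongrightarrow> p"
    using Cauchy_convergent_iff convergent_def by blast
  have "(\<lambda>n. norm (S (z n) - z n)) \<longlonglongrightarrow> 0"
    by (rule approx_sequence_residual_tendsto_zero[OF z e_pos _ q])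
      (unfold e_def[abs_def], rule LIMSEQ_inverse_real_of_nat)
  moreover have "z n \<in> D" for n
    using z[of n] by (simp add: approx_point_def)
  ultimately have "p \<in> fixed_points"
    using fixed_point_of_asymptotic_sequence \<open>z \<longlonglongrightarrow> p\<close> by blast
  moreover have "metric_proj fixed_points u = p"
    by (rule approx_sequence_limit_eq_metric_proj[OF z e_pos \<open>z \<longlonglongrightarrow> p\<close> \<open>p \<in> fixed_points\<close>])
  ultimately show thesis
    using that[OF e_pos z] \<open>z \<longlonglongrightarrow> p\<close> by simp
qed

end

section \<open>Halpern's iteration\<close>

locale halpern_iteration = nonexpansive_self_map D S
  for D :: "'a::{real_inner,complete_space} set" and S :: "'a \<Rightarrow> 'a" +
  fixes lam :: "nat \<Rightarrow> real" and u :: 'a and x :: "nat \<Rightarrow> 'a"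
  assumes steering: "steering_sequence lam" and u_in_D: "u \<in> D" and x0_in_D: "x 0 \<in> D"
    and x_Suc: "\<And>k. x (Suc k) = lam k *\<^sub>R u + (1 - lam k) *\<^sub>R S (x k)"
    and fixed_points_nonempty: "fixed_points \<noteq> {}"
begin

lemma lam_bounds: "0 \<le> lam k" "lam k \<le> 1"
  using steering unfolding steering_sequence_def by auto

lemma lam_tendsto_zero: "lam \<longlonglongrightarrow> 0"
  using steering unfolding steering_sequence_def by blast

lemma x_in_D: "x k \<in> D"
proof (induction k)
  case 0
  show ?case by (rule x0_in_D)
next
  case (Suc k)
  then have "S (x k) \<in> D"
    using S_maps_D by blast
  then show ?case
    unfolding x_Suc using convexD[OF convex_D u_in_D] lam_bounds[of k] by simp
qed

lemma dist_fixed_point_le: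
  assumes "p \<in> fixed_points"
  shows "norm (x k - p) \<le> max (norm (u - p)) (norm (x 0 - p))"
proof (induction k)
  case 0
  show ?case by simp
next
  case (Suc k)
  let ?R = "max (norm (u - p)) (norm (x 0 - p))"
  have "norm (S (x k) - p) \<le> norm (x k - p)"
    using nonexpansive_onD[OF nonexpansive_S x_in_D, of p] assms by simp
  then have "norm (S (x k) - p) \<le> ?R"
    using Suc by linarith
  have "x (Suc k) - p = lam k *\<^sub>R (u - p) + (1 - lam k) *\<^sub>R (S (x k) - p)"
    by (simp add: x_Suc algebra_simps)
  then have "norm (x (Suc k) - p) \<le> norm (lam k *\<^sub>R (u - p)) + norm ((1 - lam k) *\<^sub>R (S (x k) - p))"
    by (metis norm_triangle_ineq)
  also have "\<dots> = lam k * norm (u - p) + (1 - lam k) * norm (S (x k) - p)"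
    using lam_bounds[of k] by simp
  also have "\<dots> \<le> lam k * ?R + (1 - lam k) * ?R"
    using \<open>norm (S (x k) - p) \<le> ?R\<close> lam_bounds[of k]
    by (intro add_mono mult_left_mono) auto
  finally show ?case
    by (simp add: algebra_simps)
qed

lemma dist_anchor_image_bounded:
  obtains M where "\<And>k. norm (u - S (x k)) \<le> M"
proof -
  obtain p where p: "p \<in> fixed_points"
    using fixed_points_nonempty by blast
  have "norm (u - S (x k)) \<le> norm (u - p) + max (norm (u - p)) (norm (x 0 - p))" for k
  proof -
    have "norm (S (x k) - p) \<le> norm (x k - p)"
      using nonexpansive_onD[OF nonexpansive_S x_in_D, of p] p by simp
    then have "norm (S (x k) - p) \<le> max (norm (u - p)) (norm (x 0 - p))"
      using dist_fixed_point_le[OF p, of k] by linarith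
    then show ?thesis
      using norm_triangle_ineq[of "u - p" "p - S (x k)"] by (simp add: norm_minus_commute)
  qed
  then show thesis
    using that by blast
qed

lemma step_tendsto_zero: "(\<lambda>k. norm (x (Suc k) - x k)) \<longlonglongrightarrow> 0"
proof -
  obtain M where M: "\<And>k. norm (u - S (x k)) \<le> M"
    using dist_anchor_image_bounded by blast
  have "norm (x (Suc (Suc k)) - x (Suc k))
      \<le> (1 - lam (Suc k)) * norm (x (Suc k) - x k) + lam (Suc k) * 0 + M * \<bar>lam (Suc k) - lam k\<bar>" for k
  proof -
    have "x (Suc (Suc k)) - x (Suc k)
        = (lam (Suc k) - lam k) *\<^sub>R (u - S (x k)) + (1 - lam (Suc k)) *\<^sub>R (S (x (Suc k)) - S (x k))"
      by (simp add: x_Suc algebra_simps)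
    then have "norm (x (Suc (Suc k)) - x (Suc k))
        \<le> norm ((lam (Suc k) - lam k) *\<^sub>R (u - S (x k))) + norm ((1 - lam (Suc k)) *\<^sub>R (S (x (Suc k)) - S (x k)))"
      by (metis norm_triangle_ineq)
    also have "\<dots> = \<bar>lam (Suc k) - lam k\<bar> * norm (u - S (x k)) + (1 - lam (Suc k)) * norm (S (x (Suc k)) - S (x k))"
      using lam_bounds[of "Suc k"] by simp
    also have "\<dots> \<le> \<bar>lam (Suc k) - lam k\<bar> * M + (1 - lam (Suc k)) * norm (x (Suc k) - x k)"
      using M[of k] lam_bounds[of "Suc k"] nonexpansive_onD[OF nonexpansive_S x_in_D x_in_D]
      by (intro add_mono mult_left_mono) auto
    finally show ?thesis
      by (simp add: algebra_simps)
  qed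
  note recursion = this
  have "0 \<le> M"
    using M[of 0] norm_ge_zero order_trans by blast
  show ?thesis
  proof (rule recursive_inequality_tendsto_zero[where \<gamma> = "\<lambda>k. lam (Suc k)" and b = "\<lambda>_. 0"
        and c = "\<lambda>k. M * \<bar>lam (Suc k) - lam k\<bar>", OF _ _ _ _ _ _ recursion])
    show "\<not> summable (\<lambda>k. lam (Suc k))"
      using steering unfolding steering_sequence_def by (simp add: summable_Suc_iff)
    show "summable (\<lambda>k. M * \<bar>lam (Suc k) - lam k\<bar>)"
      using steering unfolding steering_sequence_def by (simp add: summable_mult)
    show "0 \<le> M * \<bar>lam (Suc k) - lam k\<bar>" for k
      using \<open>0 \<le> M\<close> by simp
  qed (use lam_bounds in auto)
qed

lemma residual_tendsto_zero: "(\<lambda>k. norm (S (x k) - x k)) \<longlonglongrightarrow> 0"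
proof -
  obtain M where M: "\<And>k. norm (u - S (x k)) \<le> M"
    using dist_anchor_image_bounded by blast
  have "norm (S (x k) - x k) \<le> lam k * M + norm (x (Suc k) - x k)" for k
  proof -
    have "S (x k) - x k = lam k *\<^sub>R (S (x k) - u) + (x (Suc k) - x k)"
      by (simp add: x_Suc algebra_simps)
    then have "norm (S (x k) - x k) \<le> norm (lam k *\<^sub>R (S (x k) - u)) + norm (x (Suc k) - x k)"
      by (metis norm_triangle_ineq)
    also have "norm (lam k *\<^sub>R (S (x k) - u)) = lam k * norm (u - S (x k))"
      using lam_bounds[of k] by (simp add: norm_minus_commute)
    also have "\<dots> \<le> lam k * M"
      using M[of k] lam_bounds(1)[of k] by (rule mult_left_mono)
    finally show ?thesis
      by simp
  qed
  then have "\<forall>\<^sub>F k in sequentially. norm (norm (S (x k) - x k)) \<le> lam k * M + norm (x (Suc k) - x k)"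
    by simp
  moreover have "(\<lambda>k. lam k * M + norm (x (Suc k) - x k)) \<longlonglongrightarrow> 0"
    using tendsto_add[OF tendsto_mult_right[OF lam_tendsto_zero] step_tendsto_zero] by simp
  ultimately show ?thesis
    by (rule Lim_null_comparison)
qed


lemma approx_point_near_metric_proj:
  assumes "0 < \<eta>"
  obtains e z R where "0 < e" and "approx_point u e z" and "\<And>k. norm (x k - z) \<le> R"
    and "\<And>k. inner (u - metric_proj fixed_points u) (x k - metric_proj fixed_points u)
      \<le> inner (u - z) (x k - z) + \<eta>"
proof -
  define P where "P = metric_proj fixed_points u"
  obtain e z where e: "\<And>n. 0 < e n" and z: "\<And>n. approx_point u (e n) (z n)"
    and "z \<longlonglongrightarrow> P" and P: "P \<in> fixed_points"
    using approx_curve_tendsto_metric_proj[OF u_in_D fixed_points_nonempty] unfolding P_def by blast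
  define R where "R = max (norm (u - P)) (norm (x 0 - P))"
  have "(\<lambda>n. norm (z n - P)) \<longlonglongrightarrow> 0"
    using \<open>z \<longlonglongrightarrow> P\<close> by (simp add: LIM_zero tendsto_norm_zero)
  then have "\<forall>\<^sub>F n in sequentially. norm (z n - P) < 1"
    by (rule order_tendstoD(2)) simp
  moreover have "\<forall>\<^sub>F n in sequentially. norm (z n - P) * (norm (u - P) + R + 1) < \<eta>"
    using tendsto_mult_right[OF \<open>(\<lambda>n. norm (z n - P)) \<longlonglongrightarrow> 0\<close>] \<open>0 < \<eta>\<close>
    by (intro order_tendstoD(2)) auto
  ultimately have "\<forall>\<^sub>F n in sequentially. norm (z n - P) < 1 \<and>
      norm (z n - P) * (norm (u - P) + R + 1) < \<eta>"
    by (rule eventually_conj)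
  then obtain N where "\<forall>n\<ge>N. norm (z n - P) < 1 \<and> norm (z n - P) * (norm (u - P) + R + 1) < \<eta>"
    unfolding eventually_sequentially by blast
  then have close: "norm (z N - P) < 1" "norm (z N - P) * (norm (u - P) + R + 1) < \<eta>"
    by simp_all
  have dist_x_z: "norm (x k - z N) \<le> R + 1" for k
    using dist_fixed_point_le[OF P, of k] close(1) norm_triangle_ineq[of "x k - P" "P - z N"]
    by (simp add: R_def norm_minus_commute)
  have "inner (u - P) (x k - P) \<le> inner (u - z N) (x k - z N) + \<eta>" for k
  proof -
    have "norm (z N - P) * (norm (u - P) + norm (x k - z N)) \<le> norm (z N - P) * (norm (u - P) + R + 1)"
      using dist_x_z[of k] by (intro mult_left_mono) auto
    then show ?thesis
      using inner_base_point_change_le[of u P "x k" "z N"] close(2) by linarith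
  qed
  then show thesis
    using that[OF e z dist_x_z] unfolding P_def by blast
qed

lemma eventually_inner_metric_proj_le:
  assumes "0 < \<eta>"
  shows "\<forall>\<^sub>F k in sequentially.
    inner (u - metric_proj fixed_points u) (x k - metric_proj fixed_points u) \<le> \<eta>"
proof -
  obtain e z R where "0 < e" and z: "approx_point u e z" and R: "\<And>k. norm (x k - z) \<le> R"
    and near: "\<And>k. inner (u - metric_proj fixed_points u) (x k - metric_proj fixed_points u)
      \<le> inner (u - z) (x k - z) + \<eta> / 2"
    using approx_point_near_metric_proj[of "\<eta> / 2"] \<open>0 < \<eta>\<close> by auto
  have "(\<lambda>k. norm (S (x k) - x k) * R) \<longlonglongrightarrow> 0"
    using tendsto_mult_right[OF residual_tendsto_zero] by simp
  then have "\<forall>\<^sub>F k in sequentially. norm (S (x k) - x k) * R < e * (\<eta> / 2)"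
    using \<open>0 < e\<close> \<open>0 < \<eta>\<close> by (intro order_tendstoD(2)) auto
  then show ?thesis
  proof (rule eventually_mono)
    fix k assume small: "norm (S (x k) - x k) * R < e * (\<eta> / 2)"
    have "e * inner (u - z) (x k - z) \<le> norm (S (x k) - x k) * norm (x k - z)"
      using approx_point_inner_le[OF z x_in_D] .
    also have "\<dots> \<le> norm (S (x k) - x k) * R"
      using R[of k] by (intro mult_left_mono) auto
    finally have "e * inner (u - z) (x k - z) < e * (\<eta> / 2)"
      using small by linarith
    then have "inner (u - z) (x k - z) < \<eta> / 2"
      using mult_less_cancel_left_pos[OF \<open>0 < e\<close>] by blast
    then show "inner (u - metric_proj fixed_points u) (x k - metric_proj fixed_points u) \<le> \<eta>"
      using near[of k] by linarith
  qed
qed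

lemma sq_dist_fixed_point_step:
  assumes "p \<in> fixed_points"
  shows "(norm (x (Suc k) - p))\<^sup>2
    \<le> (1 - lam k) * (norm (x k - p))\<^sup>2 + lam k * (2 * inner (u - p) (x (Suc k) - p))"
proof -
  define A B where "A = (1 - lam k) *\<^sub>R (S (x k) - p)" and "B = lam k *\<^sub>R (u - p)"
  have x_Suc_A_B: "x (Suc k) - p = A + B"
    by (simp add: x_Suc A_def B_def algebra_simps)
  have "(norm (A + B))\<^sup>2 = (norm A)\<^sup>2 + 2 * inner B (A + B) - (norm B)\<^sup>2"
    by (simp add: power2_norm_eq_inner inner_add_left inner_add_right inner_commute)
  also have "\<dots> \<le> (norm A)\<^sup>2 + 2 * inner B (A + B)"
    by simp
  also have "(norm A)\<^sup>2 \<le> (1 - lam k) * (norm (x k - p))\<^sup>2"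
  proof -
    have "(norm A)\<^sup>2 = (1 - lam k)\<^sup>2 * (norm (S (x k) - p))\<^sup>2"
      using lam_bounds[of k] by (simp add: A_def power_mult_distrib)
    also have "\<dots> \<le> (1 - lam k) * (norm (x k - p))\<^sup>2"
      using nonexpansive_onD[OF nonexpansive_S x_in_D, of p] assms lam_bounds[of k]
      by (intro mult_mono power_mono) (auto simp: power2_eq_square mult_left_le_one_le)
    finally show ?thesis .
  qed
  finally show ?thesis
    unfolding x_Suc_A_B by (simp add: B_def)
qed

theorem halpern_tendsto_metric_proj: "x \<longlonglongrightarrow> metric_proj fixed_points u"
proof -
  define P where "P = metric_proj fixed_points u"
  have P: "P \<in> fixed_points"
    using approx_curve_tendsto_metric_proj[OF u_in_D fixed_points_nonempty] unfolding P_def by blast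
  have "(\<lambda>k. (norm (x k - P))\<^sup>2) \<longlonglongrightarrow> 0"
  proof (rule recursive_inequality_tendsto_zero[where \<gamma> = lam and c = "\<lambda>_. 0"])
    show "\<not> summable lam"
      using steering unfolding steering_sequence_def by blast
    show "\<forall>\<^sub>F k in sequentially. 2 * inner (u - P) (x (Suc k) - P) \<le> \<epsilon>" if "0 < \<epsilon>" for \<epsilon>
    proof -
      have "\<forall>\<^sub>F k in sequentially. 2 * inner (u - P) (x k - P) \<le> \<epsilon>"
        using eventually_inner_metric_proj_le[of "\<epsilon> / 2"] that unfolding P_def[symmetric]
        by (auto elim: eventually_mono)
      then show ?thesis
        using eventually_sequentially_Suc[of "\<lambda>k. 2 * inner (u - P) (x k - P) \<le> \<epsilon>"] by blast
    qed
    show "(norm (x (Suc k) - P))\<^sup>2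
        \<le> (1 - lam k) * (norm (x k - P))\<^sup>2 + lam k * (2 * inner (u - P) (x (Suc k) - P)) + 0" for k
      using sq_dist_fixed_point_step[OF P] by simp
  qed (use lam_bounds in auto)
  then have "(\<lambda>k. norm (x k - P)) \<longlonglongrightarrow> 0"
    using tendsto_real_sqrt by fastforce
  then show ?thesis
    unfolding P_def by (simp add: LIM_zero_iff tendsto_norm_zero_iff)
qed

end

section \<open>String averaging of firmly nonexpansive operators\<close>

lemma string_op_Nil [simp]: "string_op T [] x = x"
  by (simp add: string_op_def)

lemma string_op_Cons [simp]: "string_op T (i # t) x = string_op T t (T i x)"
  by (simp add: string_op_def)

lemma string_op_fixed_point:
  assumes "\<forall>i\<in>set t. T i q = q"
  shows "string_op T t q = q"
  using assms by (induction t) auto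

locale firmly_nonexpansive_family =
  fixes D :: "'a::real_inner set" and T :: "nat \<Rightarrow> 'a \<Rightarrow> 'a" and I :: "nat set"
  assumes T_maps_D: "\<And>i. i \<in> I \<Longrightarrow> T i ` D \<subseteq> D"
    and T_firmly_nonexpansive: "\<And>i. i \<in> I \<Longrightarrow> firmly_nonexpansive_on D (T i)"
begin

abbreviation common_fixed_points :: "'a set" where
  "common_fixed_points \<equiv> {y \<in> D. \<forall>i\<in>I. T i y = y}"

lemma string_op_in_D:
  assumes "set t \<subseteq> I" and "x \<in> D"
  shows "string_op T t x \<in> D"
  using assms
proof (induction t arbitrary: x)
  case (Cons i t)
  then show ?case
    using T_maps_D[of i] by auto
qed simp

lemma string_op_nonexpansive:
  assumes "set t \<subseteq> I"
  shows "nonexpansive_on D (string_op T t)"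
  using assms
proof (induction t)
  case (Cons i t)
  then have i: "i \<in> I" and IH: "nonexpansive_on D (string_op T t)"
    by auto
  show ?case
    unfolding nonexpansive_on_def
  proof (intro ballI)
    fix x y assume "x \<in> D" "y \<in> D"
    then have "T i x \<in> D" "T i y \<in> D"
      using T_maps_D[OF i] by blast+
    then have "norm (string_op T t (T i x) - string_op T t (T i y)) \<le> norm (T i x - T i y)"
      by (rule nonexpansive_onD[OF IH])
    also have "\<dots> \<le> norm (x - y)"
      using firmly_nonexpansive_imp_nonexpansive[OF T_firmly_nonexpansive[OF i]] \<open>x \<in> D\<close> \<open>y \<in> D\<close>
      by (rule nonexpansive_onD)
    finally show "norm (string_op T (i # t) x - string_op T (i # t) y) \<le> norm (x - y)"
      by simp
  qed
qed (simp add: nonexpansive_on_def)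

lemma string_op_dist_common_fixed_point_le:
  assumes "set t \<subseteq> I" and "x \<in> D" and "q \<in> common_fixed_points"
  shows "norm (string_op T t x - q) \<le> norm (x - q)"
proof -
  have "string_op T t q = q"
    using assms(1,3) by (intro string_op_fixed_point) auto
  then show ?thesis
    using nonexpansive_onD[OF string_op_nonexpansive[OF assms(1)] assms(2), of q] assms(3) by simp
qed

text \<open>This is the only place where firmness, rather than mere nonexpansiveness, is needed.\<close>
lemma string_op_dist_eq_imp_fixed:
  assumes "set t \<subseteq> I" and "x \<in> D" and "q \<in> common_fixed_points"
    and "norm (string_op T t x - q) = norm (x - q)"
  shows "\<forall>i\<in>set t. T i x = x"
  using assms
proof (induction t arbitrary: x)
  case (Cons i t)
  then have i: "i \<in> I"
    by simp
  then have "T i x \<in> D"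
    using T_maps_D Cons.prems(2) by blast
  have "norm (x - q) \<le> norm (T i x - q)"
    using string_op_dist_common_fixed_point_le[OF _ \<open>T i x \<in> D\<close> Cons.prems(3), of t] Cons.prems
    by simp
  moreover have "(norm (x - T i x))\<^sup>2 + (norm (T i x - q))\<^sup>2 \<le> (norm (x - q))\<^sup>2"
    using firmly_nonexpansive_fixed_point_ineq[OF T_firmly_nonexpansive[OF i]] Cons.prems(2,3) i
    by auto
  moreover have "(norm (x - q))\<^sup>2 \<le> (norm (T i x - q))\<^sup>2"
    using calculation(1) by (simp add: power_mono)
  ultimately have "(norm (x - T i x))\<^sup>2 \<le> 0"
    by linarith
  then have "T i x = x"
    by simp
  then show ?case
    using Cons by simp
qed simp

end

locale string_averaging = firmly_nonexpansive_family D T I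
  for D :: "'a::real_inner set" and T I +
  fixes \<Omega> :: "nat list set" and w :: "nat list \<Rightarrow> real"
  assumes convex_D: "convex D" and finite_\<Omega>: "finite \<Omega>"
    and \<Omega>_indices: "\<And>t. t \<in> \<Omega> \<Longrightarrow> set t \<subseteq> I"
    and \<Omega>_covers: "\<And>i. i \<in> I \<Longrightarrow> \<exists>t\<in>\<Omega>. i \<in> set t"
    and w_pos: "\<And>t. t \<in> \<Omega> \<Longrightarrow> 0 < w t" and w_sum: "(\<Sum>t\<in>\<Omega>. w t) = 1"
begin

definition averaged_op :: "'a \<Rightarrow> 'a" where
  "averaged_op x = (\<Sum>t\<in>\<Omega>. w t *\<^sub>R string_op T t x)"

lemma averaged_op_in_D:
  assumes "x \<in> D"
  shows "averaged_op x \<in> D"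
  unfolding averaged_op_def
  using w_pos string_op_in_D[OF \<Omega>_indices assms]
  by (intro convex_sum[OF finite_\<Omega> convex_D w_sum]) (auto simp: less_imp_le)

lemma averaged_op_nonexpansive: "nonexpansive_on D averaged_op"
  unfolding nonexpansive_on_def
proof (intro ballI)
  fix x y assume "x \<in> D" "y \<in> D"
  have "averaged_op x - averaged_op y = (\<Sum>t\<in>\<Omega>. w t *\<^sub>R (string_op T t x - string_op T t y))"
    by (simp add: averaged_op_def sum_subtractf scaleR_diff_right)
  then have "norm (averaged_op x - averaged_op y) \<le> (\<Sum>t\<in>\<Omega>. w t * norm (string_op T t x - string_op T t y))"
    using w_pos norm_sum[of "\<lambda>t. w t *\<^sub>R (string_op T t x - string_op T t y)" \<Omega>]
    by (simp add: abs_of_pos)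
  also have "\<dots> \<le> (\<Sum>t\<in>\<Omega>. w t * norm (x - y))"
    using nonexpansive_onD[OF string_op_nonexpansive[OF \<Omega>_indices] \<open>x \<in> D\<close> \<open>y \<in> D\<close>] w_pos
    by (intro sum_mono mult_left_mono) (auto simp: less_imp_le)
  also have "\<dots> = norm (x - y)"
    by (simp add: sum_distrib_right[symmetric] w_sum)
  finally show "norm (averaged_op x - averaged_op y) \<le> norm (x - y)" .
qed

lemma common_fixed_point_imp_averaged_op_fixed:
  assumes "y \<in> common_fixed_points"
  shows "averaged_op y = y"
proof -
  have "averaged_op y = (\<Sum>t\<in>\<Omega>. w t *\<^sub>R y)"
    unfolding averaged_op_def using assms \<Omega>_indices
    by (intro sum.cong refl arg_cong[where f = "scaleR _"] string_op_fixed_point) blast+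
  also have "\<dots> = y"
    by (simp add: scaleR_sum_left[symmetric] w_sum)
  finally show ?thesis .
qed

lemma averaged_op_fixed_imp_common_fixed_point:
  assumes "y \<in> D" and "averaged_op y = y" and "q \<in> common_fixed_points"
  shows "y \<in> common_fixed_points"
proof -
  have dist_le: "norm (string_op T t y - q) \<le> norm (y - q)" if "t \<in> \<Omega>" for t
    using string_op_dist_common_fixed_point_le[OF \<Omega>_indices[OF that] assms(1,3)] .
  have dist_eq: "norm (string_op T t y - q) = norm (y - q)" if "t \<in> \<Omega>" for t
  proof (rule ccontr)
    assume "norm (string_op T t y - q) \<noteq> norm (y - q)"
    with dist_le[OF that] have "w t * norm (string_op T t y - q) < w t * norm (y - q)"
      using w_pos[OF that] by simp
    moreover have "\<forall>t\<in>\<Omega>. w t * norm (string_op T t y - q) \<le> w t * norm (y - q)"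
      using dist_le w_pos by (simp add: mult_left_mono less_imp_le)
    ultimately have "(\<Sum>t\<in>\<Omega>. w t * norm (string_op T t y - q)) < (\<Sum>t\<in>\<Omega>. w t * norm (y - q))"
      using finite_\<Omega> that by (intro sum_strict_mono_ex1) auto
    also have "\<dots> = norm (y - q)"
      by (simp add: sum_distrib_right[symmetric] w_sum)
    also have "norm (y - q) = norm (\<Sum>t\<in>\<Omega>. w t *\<^sub>R (string_op T t y - q))"
      using assms(2) by (simp add: averaged_op_def sum_subtractf scaleR_diff_right
          scaleR_sum_left[symmetric] w_sum)
    also have "\<dots> \<le> (\<Sum>t\<in>\<Omega>. w t * norm (string_op T t y - q))"
      using w_pos norm_sum[of "\<lambda>t. w t *\<^sub>R (string_op T t y - q)" \<Omega>]
      by (simp add: abs_of_pos)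
    finally show False
      by simp
  qed
  have "T i y = y" if "i \<in> I" for i
    using \<Omega>_covers[OF that] string_op_dist_eq_imp_fixed[OF \<Omega>_indices assms(1,3) dist_eq] by blast
  with assms(1) show ?thesis
    by blast
qed

lemma averaged_op_fixed_points:
  assumes "common_fixed_points \<noteq> {}"
  shows "{y \<in> D. averaged_op y = y} = common_fixed_points"
  using assms common_fixed_point_imp_averaged_op_fixed averaged_op_fixed_imp_common_fixed_point
  by blast

end

theorem theorem2:
  fixes D :: "'a::{real_inner, complete_space} set"
    and T :: "nat \<Rightarrow> 'a \<Rightarrow> 'a"
    and m :: nat
    and \<Omega> :: "nat list set" and w :: "nat list \<Rightarrow> real"
    and lam :: "nat \<Rightarrow> real"
    and u x0 :: 'a and x :: "nat \<Rightarrow> 'a"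
  assumes "D \<noteq> {}" and "closed D" and "convex D"
    and "m \<ge> 1"
    and "\<And>i. i \<in> {1..m} \<Longrightarrow> T i ` D \<subseteq> D"
    and "\<And>i. i \<in> {1..m} \<Longrightarrow> firmly_nonexpansive_on D (T i)"
    and "(\<Inter>i\<in>{1..m}. Fix_on D (T i)) \<noteq> {}"
    and "in_M m \<Omega> w"
    and "steering_sequence lam"
    and "u \<in> D" and "x0 \<in> D"
    and "x 0 = x0"
    and "\<And>k. x (Suc k) = lam k *\<^sub>R u + (1 - lam k) *\<^sub>R (\<Sum>t\<in>\<Omega>. w t *\<^sub>R string_op T t (x k))"
  shows "x \<longlonglongrightarrow> metric_proj (\<Inter>i\<in>{1..m}. Fix_on D (T i)) u"
proof -
  interpret averaging: string_averaging D T "{1..m}" \<Omega> w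
    using assms(3,5,6,8) unfolding in_M_def fit_def index_vector_def
    by unfold_locales auto
  have common_fixed_points: "(\<Inter>i\<in>{1..m}. Fix_on D (T i)) = averaging.common_fixed_points"
    using \<open>m \<ge> 1\<close> by (auto simp: Fix_on_def)
  then have fixed_points: "{y \<in> D. averaging.averaged_op y = y} = averaging.common_fixed_points"
    using assms(7) by (intro averaging.averaged_op_fixed_points) simp
  interpret halpern: halpern_iteration D averaging.averaged_op lam u x
  proof unfold_locales
    show "averaging.averaged_op ` D \<subseteq> D"
      using averaging.averaged_op_in_D by blast
    show "x (Suc k) = lam k *\<^sub>R u + (1 - lam k) *\<^sub>R averaging.averaged_op (x k)" for k
      using assms(13) by (simp add: averaging.averaged_op_def)
    show "{y \<in> D. averaging.averaged_op y = y} \<noteq> {}"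
      using assms(7) common_fixed_points fixed_points by simp
  qed (use assms(2,3,9-12) averaging.averaged_op_nonexpansive in auto)
  show ?thesis
    using halpern.halpern_tendsto_metric_proj common_fixed_points fixed_points by simp
qed

end
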